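(* Let $(X,d)$ be a Polish metric space, viewed as a structure in the metric signature. Then $X$ has Scott rank $0$ if and only if $X$ is ultrahomogeneous.
   Context: A metric space $(X,d)$ is viewed as a first-order structure in the signature $\{R_q : q\in\mathbb{Q}^+\}$ of binary relation symbols, where $R_q(x,y)$ holds iff $d(x,y)<q$. For a structure $M$ and finite tuples $\bar a,\bar b$ of the same length from $M$, define $\bar a\equiv_\alpha\bar b$ by induction on ordinals $\alpha$: $\bar a\equiv_0\bar b$ iff $\bar a,\bar b$ have the same quantifier-free type; for limit $\alpha$, $\bar a\equiv_\alpha\bar b$ iff $\bar a\equiv_\beta\bar b$ for all $\beta<\alpha$; $\bar a\equiv_{\alpha+1}\bar b$ iff for every $x\in M$ there is $y\in M$ with $\bar a x\equiv_\alpha\bar b y$, and for every $y\in M$ there is $x\in M$ with $\bar a x\equiv_\alpha \bar b y$. The Scott rank of $M$ is the least ordinal $\alpha$ such that for all finite tuples $\bar a,\bar b$ from $M$, $\bar a\equiv_\alpha\bar b$ implies $\bar a\equiv_{\alpha+1}\bar b$. A metric space $X$ is ultrahomogeneous if every isometry between finite subsets of $X$ extends to an isometry of $X$ onto itself. *)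

theory Defs
  imports "HOL-Analysis.Analysis"
begin

definition polish_metric_space :: "'a set \<Rightarrow> ('a \<Rightarrow> 'a \<Rightarrow> real) \<Rightarrow> bool" where
  "polish_metric_space M d \<longleftrightarrow>
     Metric_space M d \<and> Metric_space.mcomplete M d \<and>
     separable_space (Metric_space.mtopology M d)"

text \<open>Same quantifier-free type in the signature {R_q : q rational, q > 0}, where
  R_q(x,y) iff d x y < q (atomic formulas are R_q(x_i,x_j) and x_i = x_j).
  Finite tuples are lists.\<close>
definition qf_equiv :: "('a \<Rightarrow> 'a \<Rightarrow> real) \<Rightarrow> 'a list \<Rightarrow> 'a list \<Rightarrow> bool" where
  "qf_equiv d as bs \<longleftrightarrow> length as = length bs \<and>
     (\<forall>i < length as. \<forall>j < length as.
        (as ! i = as ! j \<longleftrightarrow> bs ! i = bs ! j) \<and>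
        (\<forall>q::rat. q > 0 \<longrightarrow> (d (as ! i) (as ! j) < of_rat q \<longleftrightarrow> d (bs ! i) (bs ! j) < of_rat q)))"

text \<open>Successor step of the back-and-forth hierarchy: from \<equiv>_\<alpha> to \<equiv>_{\<alpha>+1}.\<close>
definition equiv_succ :: "'a set \<Rightarrow> ('a list \<Rightarrow> 'a list \<Rightarrow> bool) \<Rightarrow> 'a list \<Rightarrow> 'a list \<Rightarrow> bool" where
  "equiv_succ M E as bs \<longleftrightarrow>
     (\<forall>x\<in>M. \<exists>y\<in>M. E (as @ [x]) (bs @ [y])) \<and>
     (\<forall>y\<in>M. \<exists>x\<in>M. E (as @ [x]) (bs @ [y]))"

definition scott_rank_zero :: "'a set \<Rightarrow> ('a \<Rightarrow> 'a \<Rightarrow> real) \<Rightarrow> bool" where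
  "scott_rank_zero M d \<longleftrightarrow>
     (\<forall>as bs. set as \<subseteq> M \<and> set bs \<subseteq> M \<and> length as = length bs \<and> qf_equiv d as bs
        \<longrightarrow> equiv_succ M (qf_equiv d) as bs)"

definition isometry_on :: "('a \<Rightarrow> 'a \<Rightarrow> real) \<Rightarrow> 'a set \<Rightarrow> 'a set \<Rightarrow> ('a \<Rightarrow> 'a) \<Rightarrow> bool" where
  "isometry_on d A B f \<longleftrightarrow> f ` A = B \<and> (\<forall>x\<in>A. \<forall>y\<in>A. d (f x) (f y) = d x y)"

definition ultrahomogeneous :: "'a set \<Rightarrow> ('a \<Rightarrow> 'a \<Rightarrow> real) \<Rightarrow> bool" where
  "ultrahomogeneous M d \<longleftrightarrow>
     (\<forall>A B f. A \<subseteq> M \<and> B \<subseteq> M \<and> finite A \<and> isometry_on d A B f \<longrightarrow>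
        (\<exists>g. isometry_on d M M g \<and> (\<forall>x\<in>A. g x = f x)))"

end

theory Submission
  imports Defs "HOL-Library.Sublist"
begin

text \<open>In a metric space, \<open>\<equiv>\<^sub>0\<close> is equality of all pairwise distances, since the rational
  cuts determine a real number. Hence Scott rank 0 says that every finite partial isometry
  extends by one point in either direction. Ultrahomogeneity gives this at once. Conversely,
  enumerate a countable dense set and run a back-and-forth argument starting from the given
  finite isometry; it produces two dense sequences with the same distances, and in a
  complete space the resulting isometry between dense sets extends to an isometry of the
  whole space onto itself, a point being determined by its distances to a dense sequence.\<close>

definition isometric_lists :: "('a \<Rightarrow> 'a \<Rightarrow> real) \<Rightarrow> 'a list \<Rightarrow> 'a list \<Rightarrow> bool" where
  "isometric_lists d as bs \<longleftrightarrow> length as = length bs \<and>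
     (\<forall>i<length as. \<forall>j<length as. d (as!i) (as!j) = d (bs!i) (bs!j))"

lemma eq_if_same_positive_rat_bounds:
  fixes x y :: real
  assumes "0 \<le> x" "0 \<le> y" and cuts: "\<And>q::rat. q > 0 \<Longrightarrow> x < of_rat q \<longleftrightarrow> y < of_rat q"
  shows "x = y"
proof (rule ccontr)
  assume "x \<noteq> y"
  then have "min x y < max x y"
    by linarith
  then obtain r where r: "r \<in> \<rat>" "min x y < r" "r < max x y"
    using Rats_dense_in_real by blast
  then obtain q where q: "r = of_rat q" by (auto elim: Rats_cases)
  have "0 < r"
    using r(2) assms(1,2) by linarith
  with q have "q > 0" by simp
  with cuts[of q] r q show False by (auto simp: min_def max_def split: if_splits)
qed

lemma (in Metric_space) qf_equiv_iff_isometric_lists: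
  assumes "set as \<subseteq> M" "set bs \<subseteq> M"
  shows "qf_equiv d as bs \<longleftrightarrow> isometric_lists d as bs"
proof -
  have "(as!i = as!j \<longleftrightarrow> bs!i = bs!j) \<and>
        (\<forall>q::rat. q > 0 \<longrightarrow> (d (as!i) (as!j) < of_rat q \<longleftrightarrow> d (bs!i) (bs!j) < of_rat q))
        \<longleftrightarrow> d (as!i) (as!j) = d (bs!i) (bs!j)"
    if "i < length as" "j < length as" "length as = length bs" for i j
  proof -
    have in_M: "as!i \<in> M" "as!j \<in> M" "bs!i \<in> M" "bs!j \<in> M"
      using that assms by (auto simp: subset_iff)
    show ?thesis
      using eq_if_same_positive_rat_bounds[of "d (as!i) (as!j)" "d (bs!i) (bs!j)"] in_M
      by (metis nonneg zero)
  qed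
  then show ?thesis
    unfolding qf_equiv_def isometric_lists_def by auto
qed

lemma (in Metric_space) scott_rank_zero_iff_one_point_extensions:
  "scott_rank_zero M d \<longleftrightarrow>
     (\<forall>as bs. set as \<subseteq> M \<longrightarrow> set bs \<subseteq> M \<longrightarrow> isometric_lists d as bs \<longrightarrow>
        (\<forall>x\<in>M. \<exists>y\<in>M. isometric_lists d (as @ [x]) (bs @ [y])) \<and>
        (\<forall>y\<in>M. \<exists>x\<in>M. isometric_lists d (as @ [x]) (bs @ [y])))"
  unfolding scott_rank_zero_def equiv_succ_def
  by (auto simp: qf_equiv_iff_isometric_lists isometric_lists_def)

lemma isometric_lists_map_isometry:
  assumes "isometry_on d M M g" "set xs \<subseteq> M"
  shows "isometric_lists d xs (map g xs)"
  using assms unfolding isometry_on_def isometric_lists_def by (auto simp: subset_iff)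

lemma (in Metric_space) isometric_lists_imp_isometry_on:
  assumes "set as \<subseteq> M" "set bs \<subseteq> M" "isometric_lists d as bs"
  obtains f where "isometry_on d (set as) (set bs) f" "map f as = bs"
proof -
  let ?n = "length as"
  define f where "f x = bs ! (SOME i. i < ?n \<and> as!i = x)" for x
  have f_nth: "f (as!i) = bs!i" if "i < ?n" for i
  proof -
    define j where "j = (SOME j. j < ?n \<and> as!j = as!i)"
    have j: "j < ?n" "as!j = as!i"
      using someI[of "\<lambda>j. j < ?n \<and> as!j = as!i" i] that by (auto simp: j_def)
    have "d (bs!j) (bs!i) = d (as!j) (as!i)"
      using assms(3) j(1) that by (simp add: isometric_lists_def)
    also have "\<dots> = 0"
      using assms(1) j that by (auto simp: subset_iff)
    finally have "d (bs!j) (bs!i) = 0" .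
    then have "bs!j = bs!i"
      using assms j that by (auto simp: isometric_lists_def subset_iff)
    then show ?thesis
      by (simp add: f_def j_def)
  qed
  have "map f as = bs"
    using assms(3) f_nth by (simp add: isometric_lists_def list_eq_iff_nth_eq)
  moreover have "isometry_on d (set as) (set bs) f"
    unfolding isometry_on_def
  proof
    show "f ` set as = set bs"
      using \<open>map f as = bs\<close> by (metis set_map)
    show "\<forall>x\<in>set as. \<forall>y\<in>set as. d (f x) (f y) = d x y"
      using assms(3) f_nth by (auto simp: isometric_lists_def in_set_conv_nth)
  qed
  ultimately show thesis
    using that by blast
qed

lemma (in Metric_space) ultrahomogeneous_imp_scott_rank_zero:
  assumes "ultrahomogeneous M d"
  shows "scott_rank_zero M d"
  unfolding scott_rank_zero_iff_one_point_extensions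
proof (intro allI impI conjI ballI)
  fix as bs
  assume as: "set as \<subseteq> M" and bs: "set bs \<subseteq> M" and iso: "isometric_lists d as bs"
  obtain f where f: "isometry_on d (set as) (set bs) f" and map_f: "map f as = bs"
    using isometric_lists_imp_isometry_on[OF as bs iso] by blast
  obtain g where g: "isometry_on d M M g" and "\<forall>x\<in>set as. g x = f x"
    using assms as bs f unfolding ultrahomogeneous_def by blast
  with map_f have "map g as = bs"
    by (metis map_eq_conv)
  have extend: "isometric_lists d (as @ [x]) (bs @ [g x])" if "x \<in> M" for x
    using isometric_lists_map_isometry[OF g, of "as @ [x]"] as that \<open>map g as = bs\<close> by simp
  have g_onto: "g ` M = M"
    using g by (simp add: isometry_on_def)
  show "\<exists>y\<in>M. isometric_lists d (as @ [x]) (bs @ [y])" if "x \<in> M" for x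
    using extend[OF that] g_onto that by blast
  show "\<exists>x\<in>M. isometric_lists d (as @ [x]) (bs @ [y])" if "y \<in> M" for y
    using extend g_onto that by (metis imageE)
qed

lemma prefix_nth_eq:
  assumes "prefix xs ys" "i < length xs"
  shows "xs ! i = ys ! i"
  using assms by (auto simp: prefix_def nth_append)

lemma prefix_chain_eq_map_limit:
  fixes xs :: "nat \<Rightarrow> 'a list"
  assumes prefix: "\<And>n. prefix (xs n) (xs (Suc n))"
    and grows: "\<And>n. length (xs n) < length (xs (Suc n))"
  shows "xs n = map (\<lambda>i. xs (Suc i) ! i) [0..<length (xs n)]"
proof -
  have mono: "prefix (xs n) (xs m)" if "n \<le> m" for n m
    using that
  proof (induction m rule: dec_induct)
    case (step m)
    from step.IH prefix[of m] show ?case by (rule prefix_order.trans)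
  qed simp
  have "i \<le> length (xs i)" for i
  proof (induction i)
    case (Suc i)
    then show ?case using grows[of i] by linarith
  qed simp
  then have long: "i < length (xs (Suc i))" for i
    using grows[of i] by (meson le_less_trans)
  have "xs n ! i = xs (Suc i) ! i" if "i < length (xs n)" for i
  proof (cases "n \<le> Suc i")
    case True
    then show ?thesis using prefix_nth_eq[OF mono[of n "Suc i"] that] by simp
  next
    case False
    then show ?thesis using prefix_nth_eq[OF mono[of "Suc i" n] long] by simp
  qed
  then show ?thesis
    by (intro nth_equalityI) simp_all
qed

lemma back_and_forth:
  fixes P :: "'a list \<Rightarrow> 'a list \<Rightarrow> bool" and e :: "nat \<Rightarrow> 'a"
  assumes start: "P as0 bs0" "length as0 = length bs0"
    and extend_forth: "\<And>as bs x. P as bs \<Longrightarrow> x \<in> S \<Longrightarrow> \<exists>y. P (as @ [x]) (bs @ [y])"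
    and extend_back: "\<And>as bs y. P as bs \<Longrightarrow> y \<in> S \<Longrightarrow> \<exists>x. P (as @ [x]) (bs @ [y])"
    and enum: "range e \<subseteq> S"
  obtains a b where "\<And>n. \<exists>m\<ge>n. P (map a [0..<m]) (map b [0..<m])"
    and "map a [0..<length as0] = as0" "map b [0..<length as0] = bs0"
    and "range e \<subseteq> range a" "range e \<subseteq> range b"
proof -
  define fwd where "fwd x p = (fst p @ [x], snd p @ [SOME y. P (fst p @ [x]) (snd p @ [y])])"
    for x and p :: "'a list \<times> 'a list"
  define bwd where "bwd y p = (fst p @ [SOME x. P (fst p @ [x]) (snd p @ [y])], snd p @ [y])"
    for y and p :: "'a list \<times> 'a list"
  define seq where "seq = rec_nat (as0, bs0) (\<lambda>n p. bwd (e n) (fwd (e n) p))"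
  have seq_0: "seq 0 = (as0, bs0)" and seq_Suc: "seq (Suc n) = bwd (e n) (fwd (e n) (seq n))" for n
    by (simp_all add: seq_def)
  have fwd_P: "case_prod P (fwd x p)" if "case_prod P p" "x \<in> S" for x p
    using someI_ex[OF extend_forth[OF that[unfolded case_prod_beta]]] by (simp add: fwd_def)
  have bwd_P: "case_prod P (bwd y p)" if "case_prod P p" "y \<in> S" for y p
    using someI_ex[OF extend_back[OF that[unfolded case_prod_beta]]] by (simp add: bwd_def)
  have P_seq: "case_prod P (seq n)" for n
  proof (induction n)
    case 0
    show ?case using start by (simp add: seq_0)
  next
    case (Suc n)
    have "e n \<in> S" using enum by blast
    with Suc show ?case by (simp only: seq_Suc) (intro bwd_P fwd_P)
  qed
  have len_seq: "length (fst (seq n)) = length as0 + 2 * n"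
    "length (snd (seq n)) = length as0 + 2 * n" for n
    by (induction n) (simp_all add: seq_0 seq_Suc fwd_def bwd_def start)
  have prefix_seq: "prefix (fst (seq n)) (fst (seq (Suc n)))" "prefix (snd (seq n)) (snd (seq (Suc n)))" for n
    by (simp_all add: seq_Suc fwd_def bwd_def)
  define a where "a i = fst (seq (Suc i)) ! i" for i
  define b where "b i = snd (seq (Suc i)) ! i" for i
  have a_seq: "fst (seq n) = map a [0..<length as0 + 2 * n]" for n
  proof -
    have "fst (seq n) = map a [0..<length (fst (seq n))]"
      unfolding a_def by (rule prefix_chain_eq_map_limit[of "\<lambda>n. fst (seq n)"])
        (simp_all add: prefix_seq len_seq)
    then show ?thesis by (simp only: len_seq)
  qed
  have b_seq: "snd (seq n) = map b [0..<length as0 + 2 * n]" for n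
  proof -
    have "snd (seq n) = map b [0..<length (snd (seq n))]"
      unfolding b_def by (rule prefix_chain_eq_map_limit[of "\<lambda>n. snd (seq n)"])
        (simp_all add: prefix_seq len_seq)
    then show ?thesis by (simp only: len_seq)
  qed
  show thesis
  proof
    show "\<exists>m\<ge>n. P (map a [0..<m]) (map b [0..<m])" for n
      using P_seq[of n] by (intro exI[of _ "length as0 + 2 * n"])
        (simp add: a_seq[symmetric] b_seq[symmetric] case_prod_beta)
    show "map a [0..<length as0] = as0" "map b [0..<length as0] = bs0"
      using a_seq[of 0] b_seq[of 0] by (simp_all add: seq_0)
    have "e n \<in> set (fst (seq (Suc n)))" "e n \<in> set (snd (seq (Suc n)))" for n
      by (simp_all add: seq_Suc fwd_def bwd_def)
    moreover have "set (fst (seq k)) \<subseteq> range a" "set (snd (seq k)) \<subseteq> range b" for k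
      by (auto simp: a_seq b_seq)
    ultimately show "range e \<subseteq> range a" "range e \<subseteq> range b"
      by blast+
  qed
qed

definition (in Metric_space) dense_seq :: "(nat \<Rightarrow> 'a) \<Rightarrow> bool" where
  "dense_seq a \<longleftrightarrow> range a \<subseteq> M \<and> (\<forall>x\<in>M. \<forall>\<epsilon>>0. \<exists>i. d x (a i) < \<epsilon>)"

lemma (in Metric_space) separable_imp_dense_seq:
  assumes "separable_space mtopology" "M \<noteq> {}"
  obtains e where "dense_seq e"
proof -
  obtain C where C: "countable C" "C \<subseteq> M" "mtopology closure_of C = M"
    using assms(1) unfolding separable_space_def by auto
  with assms(2) have "C \<noteq> {}" by auto
  have "\<exists>i. d x (from_nat_into C i) < \<epsilon>" if x: "x \<in> M" and \<epsilon>: "\<epsilon> > 0" for x \<epsilon>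
  proof -
    have "x \<in> mtopology closure_of C"
      using C(3) x by simp
    then obtain y where "y \<in> C" "d x y < \<epsilon>"
      using \<epsilon> unfolding metric_closure_of by auto
    moreover obtain i where "from_nat_into C i = y"
      using from_nat_into_surj[OF C(1) \<open>y \<in> C\<close>] by blast
    ultimately show ?thesis by blast
  qed
  moreover have "range (from_nat_into C) \<subseteq> M"
    using C(1,2) \<open>C \<noteq> {}\<close> by (simp add: range_from_nat_into)
  ultimately have "dense_seq (from_nat_into C)"
    by (simp add: dense_seq_def)
  then show thesis ..
qed

lemma (in Metric_space) dense_seq_superrange:
  assumes "dense_seq e" "range e \<subseteq> range a" "range a \<subseteq> M"
  shows "dense_seq a"
  using assms unfolding dense_seq_def by (metis imageE range_subsetD)

lemma (in Metric_space) dense_seq_approximates: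
  assumes "dense_seq a" "x \<in> M"
  obtains \<sigma> where "limitin mtopology (a \<circ> \<sigma>) x sequentially"
proof -
  have "\<forall>n. \<exists>i. d x (a i) < inverse (real (Suc n))"
    using assms by (simp add: dense_seq_def)
  then obtain \<sigma> where \<sigma>: "\<And>n. d x (a (\<sigma> n)) < inverse (real (Suc n))"
    by metis
  have "((\<lambda>n. d ((a \<circ> \<sigma>) n) x) \<longlongrightarrow> 0) sequentially"
    by (rule tendsto_sandwich[OF _ _ tendsto_const LIMSEQ_inverse_real_of_nat])
      (use \<sigma> in \<open>auto simp: commute less_imp_le\<close>)
  moreover have "range (a \<circ> \<sigma>) \<subseteq> M"
    using assms(1) by (auto simp: dense_seq_def)
  ultimately have "limitin mtopology (a \<circ> \<sigma>) x sequentially"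
    using assms(2) by (auto simp: limitin_metric_dist_null intro: always_eventually)
  then show thesis ..
qed

lemma (in Metric_space) limitin_imp_tendsto_dist:
  assumes "limitin mtopology f l F" "z \<in> M"
  shows "((\<lambda>n. d (f n) z) \<longlongrightarrow> d l z) F"
proof -
  have l: "l \<in> M" "eventually (\<lambda>n. f n \<in> M) F" "((\<lambda>n. d (f n) l) \<longlongrightarrow> 0) F"
    using assms(1) by (simp_all add: limitin_metric_dist_null)
  have "eventually (\<lambda>n. norm (d (f n) z - d l z) \<le> d (f n) l) F"
    using l(2)
  proof (rule eventually_mono)
    fix n assume "f n \<in> M"
    then show "norm (d (f n) z - d l z) \<le> d (f n) l"
      using triangle[of "f n" l z] triangle[of l "f n" z] l(1) assms(2) commute[of l "f n"] by simp
  qed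
  then have "((\<lambda>n. d (f n) z - d l z) \<longlongrightarrow> 0) F"
    using l(3) by (rule Lim_null_comparison)
  then show ?thesis
    by (rule LIM_zero_cancel)
qed

text \<open>The profile of \<open>x\<close> along a sequence \<open>a\<close> is \<open>\<lambda>i. d x (a i)\<close>. When \<open>a\<close> and \<open>b\<close> have
  the same pairwise distances, every profile along a dense \<open>a\<close> is realised along \<open>b\<close> (by a
  limit of \<open>b\<close> along indices where \<open>a\<close> converges to \<open>x\<close>), and profiles determine distances.\<close>

lemma (in Metric_space) dense_seq_profile_realised:
  assumes "mcomplete" "dense_seq a" "range b \<subseteq> M"
    and same_dist: "\<And>i j. d (a i) (a j) = d (b i) (b j)" and "x \<in> M"
  obtains y where "y \<in> M" "\<And>i. d y (b i) = d x (a i)"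
proof -
  obtain \<sigma> where a_lim: "limitin mtopology (a \<circ> \<sigma>) x sequentially"
    using dense_seq_approximates[OF assms(2,5)] .
  have "range (a \<circ> \<sigma>) \<subseteq> M"
    using assms(2) by (auto simp: dense_seq_def)
  then have "MCauchy (a \<circ> \<sigma>)"
    using a_lim by (rule convergent_imp_MCauchy)
  then have "MCauchy (b \<circ> \<sigma>)"
    using assms(3) by (auto simp: MCauchy_def same_dist)
  then obtain y where b_lim: "limitin mtopology (b \<circ> \<sigma>) y sequentially"
    using assms(1) unfolding mcomplete_def by blast
  have "d y (b i) = d x (a i)" for i
  proof (rule LIMSEQ_unique)
    show "(\<lambda>n. d (b (\<sigma> n)) (b i)) \<longlonglongrightarrow> d y (b i)"
      using limitin_imp_tendsto_dist[OF b_lim, of "b i"] assms(3) by auto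
    show "(\<lambda>n. d (b (\<sigma> n)) (b i)) \<longlonglongrightarrow> d x (a i)"
      using limitin_imp_tendsto_dist[OF a_lim, of "a i"] assms(2) by (auto simp: dense_seq_def same_dist)
  qed
  moreover have "y \<in> M"
    using b_lim by (rule limitin_mspace)
  ultimately show thesis
    using that by blast
qed

lemma (in Metric_space) dist_eq_if_same_profiles:
  assumes "dense_seq a" "range b \<subseteq> M" "x \<in> M" "x' \<in> M" "y \<in> M" "y' \<in> M"
    and y: "\<And>i. d y (b i) = d x (a i)" and y': "\<And>i. d y' (b i) = d x' (a i)"
  shows "d y y' = d x x'"
proof (rule ccontr)
  assume "d y y' \<noteq> d x x'"
  then have "\<bar>d y y' - d x x'\<bar> / 2 > 0" by simp
  then obtain i where i: "d x' (a i) < \<bar>d y y' - d x x'\<bar> / 2"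
    using assms(1,4) unfolding dense_seq_def by blast
  have "a i \<in> M" "b i \<in> M"
    using assms(1,2) by (auto simp: dense_seq_def)
  then have "d y y' \<le> d y (b i) + d (b i) y'" "d y (b i) \<le> d y y' + d y' (b i)"
    "d x x' \<le> d x (a i) + d (a i) x'" "d x (a i) \<le> d x x' + d x' (a i)"
    using triangle[of y "b i" y'] triangle[of y y' "b i"]
      triangle[of x "a i" x'] triangle[of x x' "a i"] assms(3-6) by simp_all
  then have "\<bar>d y y' - d x x'\<bar> \<le> 2 * d x' (a i)"
    unfolding abs_le_iff using y[of i] y'[of i] commute[of x' "a i"] commute[of y' "b i"]
    by (intro conjI) linarith+
  with i show False
    by simp
qed

lemma (in Metric_space) isometry_extending_dense_seqs:
  assumes "mcomplete" "dense_seq a" "dense_seq b"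
    and same_dist: "\<And>i j. d (a i) (a j) = d (b i) (b j)"
  obtains g where "isometry_on d M M g" "\<And>i. g (a i) = b i"
proof
  have ranges: "range a \<subseteq> M" "range b \<subseteq> M"
    using assms(2,3) by (simp_all add: dense_seq_def)
  define g where "g x = (SOME y. y \<in> M \<and> (\<forall>i. d y (b i) = d x (a i)))" for x
  have g: "g x \<in> M" "\<And>i. d (g x) (b i) = d x (a i)" if x: "x \<in> M" for x
  proof -
    obtain y where "y \<in> M" "\<And>i. d y (b i) = d x (a i)"
      using dense_seq_profile_realised[OF assms(1,2) ranges(2) same_dist x] by blast
    then have "g x \<in> M \<and> (\<forall>i. d (g x) (b i) = d x (a i))"
      unfolding g_def by (intro someI_ex[of "\<lambda>y. y \<in> M \<and> (\<forall>i. d y (b i) = d x (a i))"]) blast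
    then show "g x \<in> M" "\<And>i. d (g x) (b i) = d x (a i)"
      by simp_all
  qed
  have g_dist: "d (g x) (g x') = d x x'" if "x \<in> M" "x' \<in> M" for x x'
    using dist_eq_if_same_profiles[OF assms(2) ranges(2) that g(1)[OF that(1)] g(1)[OF that(2)]]
      g(2) that by blast
  have g_unique: "g x = y" if x: "x \<in> M" and y: "y \<in> M" "\<And>i. d y (b i) = d x (a i)" for x y
  proof -
    have "d (g x) y = d x x"
      using dist_eq_if_same_profiles[OF assms(2) ranges(2) x x g(1)[OF x] y(1)] g(2)[OF x] y(2)
      by blast
    then show ?thesis
      using x y(1) g(1)[OF x] by simp
  qed
  have "M \<subseteq> g ` M"
  proof
    fix y assume "y \<in> M"
    then obtain x where "x \<in> M" "\<And>i. d x (a i) = d y (b i)"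
      using dense_seq_profile_realised[OF assms(1,3) ranges(1) same_dist[symmetric]] by blast
    then have "g x = y"
      using g_unique[OF _ \<open>y \<in> M\<close>] by simp
    with \<open>x \<in> M\<close> show "y \<in> g ` M" by blast
  qed
  then have "g ` M = M"
    using g(1) by blast
  then show "isometry_on d M M g"
    using g_dist by (simp add: isometry_on_def)
  show "g (a i) = b i" for i
    using g_unique[of "a i" "b i"] ranges same_dist by auto
qed

lemma (in Metric_space) scott_rank_zero_dense_back_and_forth:
  assumes sr0: "scott_rank_zero M d" and "separable_space mtopology" "M \<noteq> {}"
    and start: "set as0 \<subseteq> M" "set bs0 \<subseteq> M" "isometric_lists d as0 bs0"
  obtains a b where "dense_seq a" "dense_seq b" "\<And>i j. d (a i) (a j) = d (b i) (b j)"
    and "map a [0..<length as0] = as0" "map b [0..<length as0] = bs0"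
proof -
  obtain e where e: "dense_seq e"
    using separable_imp_dense_seq[OF assms(2,3)] .
  let ?P = "\<lambda>as bs. set as \<subseteq> M \<and> set bs \<subseteq> M \<and> isometric_lists d as bs"
  have len: "length as0 = length bs0"
    using start(3) by (simp add: isometric_lists_def)
  have e_M: "range e \<subseteq> M"
    using e by (simp add: dense_seq_def)
  have extend_forth: "\<exists>y. ?P (as @ [x]) (bs @ [y])" if P: "?P as bs" and x: "x \<in> M" for as bs x
  proof -
    obtain y where "y \<in> M" "isometric_lists d (as @ [x]) (bs @ [y])"
      using sr0 P x unfolding scott_rank_zero_iff_one_point_extensions by blast
    with P x show ?thesis by auto
  qed
  have extend_back: "\<exists>x. ?P (as @ [x]) (bs @ [y])" if P: "?P as bs" and y: "y \<in> M" for as bs y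
  proof -
    obtain x where "x \<in> M" "isometric_lists d (as @ [x]) (bs @ [y])"
      using sr0 P y unfolding scott_rank_zero_iff_one_point_extensions by blast
    with P y show ?thesis by auto
  qed
  obtain a b where P: "\<And>n. \<exists>m\<ge>n. ?P (map a [0..<m]) (map b [0..<m])"
    and init: "map a [0..<length as0] = as0" "map b [0..<length as0] = bs0"
    and cover: "range e \<subseteq> range a" "range e \<subseteq> range b"
    using back_and_forth[of ?P, OF _ len extend_forth extend_back e_M] start by blast
  have ab: "a i \<in> M" "b i \<in> M" "d (a i) (a j) = d (b i) (b j)" for i j
  proof -
    obtain m where m: "Suc (max i j) \<le> m" "?P (map a [0..<m]) (map b [0..<m])"
      using P by blast
    then have "i < m" "j < m" by auto
    with m(2) show "a i \<in> M" "b i \<in> M" "d (a i) (a j) = d (b i) (b j)"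
      by (auto simp: isometric_lists_def)
  qed
  have "range a \<subseteq> M" "range b \<subseteq> M"
    using ab(1,2) by auto
  then have "dense_seq a" "dense_seq b"
    using dense_seq_superrange[OF e] cover by simp_all
  then show thesis
    by (rule that[OF _ _ ab(3) init])
qed

lemma (in Metric_space) scott_rank_zero_imp_ultrahomogeneous:
  assumes sr0: "scott_rank_zero M d" and "mcomplete" "separable_space mtopology"
  shows "ultrahomogeneous M d"
  unfolding ultrahomogeneous_def
proof (intro allI impI)
  fix A B f assume "A \<subseteq> M \<and> B \<subseteq> M \<and> finite A \<and> isometry_on d A B f"
  then have A: "A \<subseteq> M" "finite A" and B: "B \<subseteq> M" and f: "isometry_on d A B f"
    by auto
  show "\<exists>g. isometry_on d M M g \<and> (\<forall>x\<in>A. g x = f x)"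
  proof (cases "M = {}")
    case True
    with A have "A = {}" by blast
    with True show ?thesis by (simp add: isometry_on_def)
  next
    case False
    obtain as0 where as0: "set as0 = A"
      using finite_list[OF A(2)] by blast
    have "isometric_lists d as0 (map f as0)"
      using f as0 by (auto simp: isometry_on_def isometric_lists_def)
    moreover have "set (map f as0) \<subseteq> M"
      using f as0 B by (auto simp: isometry_on_def)
    ultimately obtain a b where "dense_seq a" "dense_seq b" "\<And>i j. d (a i) (a j) = d (b i) (b j)"
      and init: "map a [0..<length as0] = as0" "map b [0..<length as0] = map f as0"
      using scott_rank_zero_dense_back_and_forth[OF sr0 assms(3) False] A(1) as0 by blast
    then obtain g where g: "isometry_on d M M g" "\<And>i. g (a i) = b i"
      using isometry_extending_dense_seqs[OF assms(2)] by blast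
    have "g (as0 ! k) = f (as0 ! k)" if "k < length as0" for k
    proof -
      have "as0 ! k = a k" "f (as0 ! k) = b k"
        using arg_cong[OF init(1), of "\<lambda>xs. xs ! k"] arg_cong[OF init(2), of "\<lambda>xs. xs ! k"] that
        by simp_all
      with g(2) show ?thesis by simp
    qed
    then have "\<forall>x\<in>A. g x = f x"
      using as0 by (auto simp: in_set_conv_nth)
    with g(1) show ?thesis by blast
  qed
qed

theorem mainTheorem1:
  fixes M :: "'a set" and d :: "'a \<Rightarrow> 'a \<Rightarrow> real"
  assumes "polish_metric_space M d"
  shows "scott_rank_zero M d \<longleftrightarrow> ultrahomogeneous M d"
proof -
  interpret Metric_space M d
    using assms by (simp add: polish_metric_space_def)
  have "mcomplete" "separable_space mtopology"
    using assms by (simp_all add: polish_metric_space_def)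
  then show ?thesis
    using scott_rank_zero_imp_ultrahomogeneous ultrahomogeneous_imp_scott_rank_zero by blast
qed

end
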